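(* Let $\kappa\in\mathbb Z[q,q^{-1}]$ satisfy $\overline{\kappa}=\kappa$, write $\kappa=\sum_{i\in\mathbb Z}c_iq^i$, and set $\diamondsuit=\sum_{i\in\mathbb Z}(-1)^ic_{2i}$. Let $t=F+\check E+\kappa K^{-1}$, $B_{\rm ev}=\frac{t^2-\diamondsuit^2}{[2]}$ and $B_{\rm odd}=\frac{t^2-1+\diamondsuit^2}{[2]}$. Then in $\mathbf U$ $$B_{\rm ev}=\check E^{(2)}+q^{-1}\check EF+F^{(2)}+q^{-1}\kappa K^{-1}F+q^{-1}\kappa\check EK^{-1}+\bigl(q+(q^3-q)\kappa^2\bigr)\frac{K^{-2}-1}{q^4-1}+\frac{\kappa^2-\diamondsuit^2}{[2]},$$ $$B_{\rm odd}=\check E^{(2)}+q^{-1}\check EF+F^{(2)}+q^{-1}\kappa K^{-1}F+q^{-1}\kappa\check EK^{-1}+\bigl(q+(q^3-q)\kappa^2\bigr)\frac{K^{-2}-q^2}{q^4-1}+\frac{q^2(\kappa^2-\diamondsuit^2)}{[2]}+q\diamondsuit^2.$$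
   Context: $q$ is an indeterminate, bar is the ring involution of $\mathbb Z[q,q^{-1}]$ with $q\mapsto q^{-1}$, $[n]=\frac{q^n-q^{-n}}{q-q^{-1}}$, $[2]!=[2]$. $\mathbf U$ is the $\mathbb Q(q)$-algebra generated by $E,F,K^{\pm1}$ with relations $KK^{-1}=K^{-1}K=1$, $EF-FE=\frac{K-K^{-1}}{q-q^{-1}}$, $KE=q^2EK$, $KF=q^{-2}FK$; $\check E=q^{-1}EK^{-1}$, $\check E^{(2)}=\check E^2/[2]$, $F^{(2)}=F^2/[2]$. *)

theory Defs
  imports "HOL-Computational_Algebra.Polynomial" "HOL-Computational_Algebra.Fraction_Field"
begin

type_synonym Qq = "rat poly fract"

definition qv :: Qq where "qv = Fract [:0, 1:] 1"

definition qint :: "int \<Rightarrow> Qq" where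
  "qint n = (qv powi n - qv powi (-n)) / (qv - inverse qv)"

text \<open>Laurent polynomial in Z[q,q^-1] with finitely supported coefficients c, viewed in Q(q).\<close>
definition laurent :: "(int \<Rightarrow> int) \<Rightarrow> Qq" where
  "laurent c = (\<Sum>i\<in>{i. c i \<noteq> 0}. of_int (c i) * qv powi i)"

definition lbar :: "(int \<Rightarrow> int) \<Rightarrow> (int \<Rightarrow> int)" where
  "lbar c = (\<lambda>i. c (- i))"

text \<open>phi : Q(q) -> A is a central unital ring homomorphism (A a Q(q)-algebra) and
  E, F, K, Ki satisfy the defining relations of U.\<close>
definition U_alg :: "(Qq \<Rightarrow> 'a::ring_1) \<Rightarrow> 'a \<Rightarrow> 'a \<Rightarrow> 'a \<Rightarrow> 'a \<Rightarrow> bool" where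
  "U_alg \<phi> E F K Ki \<longleftrightarrow>
     (\<forall>a b. \<phi> (a + b) = \<phi> a + \<phi> b) \<and> (\<forall>a b. \<phi> (a * b) = \<phi> a * \<phi> b) \<and> \<phi> 1 = 1 \<and>
     (\<forall>a x. \<phi> a * x = x * \<phi> a) \<and>
     K * Ki = 1 \<and> Ki * K = 1 \<and>
     E * F - F * E = \<phi> (inverse (qv - inverse qv)) * (K - Ki) \<and>
     K * E = \<phi> (qv ^ 2) * E * K \<and>
     K * F = \<phi> (inverse (qv ^ 2)) * F * K"

end

theory Submission
  imports Defs
begin

text \<open>Write Ech for q^-1 E K^-1. The three summands of t = F + Ech + \<kappa> K^-1 q-commute up to
  a single correction term, which comes from the relation for EF - FE:
  F K^-1 = q^-2 K^-1 F,  K^-1 Ech = q^-2 Ech K^-1,  F Ech = q^-2 Ech F + (K^-2 - 1)/(q^2 - 1).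
  Hence each anticommutator of two summands is q^-1 [2] times an ordered monomial (plus the
  correction), and t^2 = [2] B + (\<kappa>^2 + 1/(q^2 - 1)) K^-2 - 1/(q^2 - 1), where B is the part
  common to both formulas. Dividing by [2] leaves an identity between scalars in each case.\<close>

lemma qv_nonzero: "qv \<noteq> 0"
  by (simp add: qv_def Zero_fract_def eq_fract)

lemma qv_power_neq_one:
  assumes "n > 0" shows "qv ^ n \<noteq> 1"
proof
  have "qv ^ n = Fract ([:0, 1:] ^ n) 1"
    by (induction n) (simp_all add: qv_def One_fract_def mult.commute)
  moreover assume "qv ^ n = 1"
  ultimately have "[:0, 1:] ^ n = (1 :: rat poly)"
    by (simp add: One_fract_def eq_fract)
  then have "degree ([:0, 1 :: rat:] ^ n) = 0" by simp
  with assms show False by (simp add: degree_power_eq)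
qed

lemma qint_2: "qint 2 = qv + inverse qv"
proof -
  have "qv ^ 2 \<noteq> 1" by (rule qv_power_neq_one) simp
  with qv_nonzero show ?thesis
    by (simp add: qint_def power_int_minus field_simps power2_eq_square)
qed

lemma quantum_two_identities:
  fixes x k d :: "'b::field"
  assumes x: "x \<noteq> 0" and x4: "x ^ 4 \<noteq> 1"
  defines "two \<equiv> x + inverse x" and "C \<equiv> (x + (x ^ 3 - x) * k ^ 2) / (x ^ 4 - 1)"
  shows "two \<noteq> 0"
    and "two * inverse x = 1 + inverse (x ^ 2)"
    and "inverse x * inverse (x - inverse x) = inverse (x ^ 2 - 1)"
    and "inverse two * (k ^ 2 + inverse (x ^ 2 - 1)) = C"
    and "inverse two * (inverse (x ^ 2 - 1) + d) = C - (k ^ 2 - d) / two"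
    and "inverse two * (inverse (x ^ 2 - 1) + 1 - d) = C * x ^ 2 - x ^ 2 * (k ^ 2 - d) / two - x * d"
proof -
  have x4_factor: "x ^ 4 - 1 = (x ^ 2 - 1) * (x ^ 2 + 1)"
    by (simp add: algebra_simps power2_eq_square power4_eq_xxxx)
  with x4 have x2m: "x ^ 2 - 1 \<noteq> 0" and x2p: "x ^ 2 + 1 \<noteq> 0" by auto
  have two: "two = (x ^ 2 + 1) / x"
    using x by (simp add: two_def field_simps power2_eq_square)
  show "two \<noteq> 0"
    using x x2p by (simp add: two)
  show "two * inverse x = 1 + inverse (x ^ 2)"
    using x by (simp add: two field_simps power2_eq_square)
  show "inverse x * inverse (x - inverse x) = inverse (x ^ 2 - 1)"
    using x x2m by (simp add: field_simps power2_eq_square)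
  have inv_two: "inverse two * (x ^ 2 + 1) = x"
    using x2p by (simp add: two)
  have inv_x2m: "inverse (x ^ 2 - 1) * (x ^ 2 - 1) = 1"
    using x2m by simp
  show C: "inverse two * (k ^ 2 + inverse (x ^ 2 - 1)) = C"
    unfolding C_def x4_factor using x x2m x2p
    by (simp add: two field_simps) (simp add: algebra_simps power2_eq_square power3_eq_cube)
  show "inverse two * (inverse (x ^ 2 - 1) + d) = C - (k ^ 2 - d) / two"
    unfolding C[symmetric] by (simp add: divide_inverse algebra_simps)
  show "inverse two * (inverse (x ^ 2 - 1) + 1 - d) = C * x ^ 2 - x ^ 2 * (k ^ 2 - d) / two - x * d"
  proof -
    have "C * x ^ 2 - x ^ 2 * (k ^ 2 - d) / two - x * d
        = inverse two * (inverse (x ^ 2 - 1) * (x ^ 2 - 1)) + inverse two * inverse (x ^ 2 - 1)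
          + d * (inverse two * (x ^ 2 + 1)) - d * inverse two - x * d"
      unfolding C[symmetric] by (simp add: divide_inverse algebra_simps)
    also have "\<dots> = inverse two * (inverse (x ^ 2 - 1) + 1 - d)"
      unfolding inv_two inv_x2m by (simp add: algebra_simps)
    finally show ?thesis ..
  qed
qed

lemmas qv_identities =
  quantum_two_identities[OF qv_nonzero qv_power_neq_one[of 4, simplified], folded qint_2]

locale U_representation =
  fixes \<phi> :: "Qq \<Rightarrow> 'a::ring_1" and E F K Ki :: 'a
  assumes U_alg: "U_alg \<phi> E F K Ki"
begin

text \<open>The scalar action gets its own constant: stated directly for \<open>\<phi> a * x\<close>, the rule
  \<open>x * (\<phi> a * y) = \<phi> a * (x * y)\<close> makes the simplifier swap two scalars forever.\<close>

definition scale :: "Qq \<Rightarrow> 'a \<Rightarrow> 'a" (infixr "\<cdot>" 75)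
  where "a \<cdot> x = \<phi> a * x"

lemma \<phi>_add: "\<phi> (a + b) = \<phi> a + \<phi> b"
  and \<phi>_mult: "\<phi> (a * b) = \<phi> a * \<phi> b"
  and \<phi>_one: "\<phi> 1 = 1"
  and \<phi>_commute: "\<phi> a * x = x * \<phi> a"
  and K_Ki: "K * Ki = 1"
  and Ki_K: "Ki * K = 1"
  and E_F: "E * F - F * E = inverse (qv - inverse qv) \<cdot> (K - Ki)"
  and K_E: "K * E = qv ^ 2 \<cdot> (E * K)"
  and K_F: "K * F = inverse (qv ^ 2) \<cdot> (F * K)"
  using U_alg unfolding U_alg_def scale_def mult.assoc by blast+

lemma scale_scale: "a \<cdot> b \<cdot> x = (a * b) \<cdot> x"
  by (simp add: scale_def \<phi>_mult mult.assoc)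

lemma mult_scale_left: "(a \<cdot> x) * y = a \<cdot> (x * y)"
  by (simp add: scale_def mult.assoc)

lemma mult_scale_right: "x * (a \<cdot> y) = a \<cdot> (x * y)"
  by (metis scale_def \<phi>_commute mult.assoc)

lemma scale_one: "1 \<cdot> x = x"
  by (simp add: scale_def \<phi>_one)

lemma scale_left_distrib: "(a + b) \<cdot> x = a \<cdot> x + b \<cdot> x"
  by (simp add: scale_def \<phi>_add distrib_right)

lemma scale_right_distrib: "a \<cdot> (x + y) = a \<cdot> x + a \<cdot> y"
  by (simp add: scale_def distrib_left)

lemma scale_zero_left: "0 \<cdot> x = 0"
  using scale_left_distrib[of 0 0 x] by simp

lemma scale_minus_left: "(- a) \<cdot> x = - (a \<cdot> x)"
  using scale_left_distrib[of a "- a" x] by (simp add: scale_zero_left add_eq_0_iff)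

lemma scale_left_diff_distrib: "(a - b) \<cdot> x = a \<cdot> x - b \<cdot> x"
  using scale_left_distrib[of a "- b" x] by (simp add: scale_minus_left)

lemma scale_right_diff_distrib: "a \<cdot> (x - y) = a \<cdot> x - a \<cdot> y"
  by (simp add: scale_def right_diff_distrib)

lemmas scale_simps = scale_scale mult_scale_left mult_scale_right scale_one
  scale_left_distrib scale_right_distrib scale_left_diff_distrib scale_right_diff_distrib

definition E_check :: 'a where "E_check = inverse qv \<cdot> (E * Ki)"

lemma F_Ki: "F * Ki = inverse (qv ^ 2) \<cdot> (Ki * F)"
proof -
  have "F * Ki = Ki * (K * F) * Ki" by (simp add: Ki_K mult.assoc[symmetric])
  also have "\<dots> = inverse (qv ^ 2) \<cdot> (Ki * F)"
    by (simp add: K_F mult.assoc K_Ki scale_simps)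
  finally show ?thesis .
qed

lemma Ki_E: "Ki * E = inverse (qv ^ 2) \<cdot> (E * Ki)"
proof -
  have "E * Ki = Ki * (K * E) * Ki" by (simp add: Ki_K mult.assoc[symmetric])
  also have "\<dots> = qv ^ 2 \<cdot> (Ki * E)"
    by (simp add: K_E mult.assoc K_Ki scale_simps)
  finally show ?thesis
    using qv_nonzero by (simp add: scale_simps)
qed

lemma Ki_E_check: "Ki * E_check = inverse (qv ^ 2) \<cdot> (E_check * Ki)"
  unfolding E_check_def by (simp add: scale_simps Ki_E mult.assoc[symmetric] mult.commute)

lemma F_E_check:
  "F * E_check = inverse (qv ^ 2) \<cdot> (E_check * F) + inverse (qv ^ 2 - 1) \<cdot> (Ki ^ 2 - 1)"
proof -
  have "F * E_check = inverse qv \<cdot> (E * (F * Ki))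
      - inverse qv \<cdot> inverse (qv - inverse qv) \<cdot> ((K - Ki) * Ki)"
  proof -
    have "F * E = E * F - inverse (qv - inverse qv) \<cdot> (K - Ki)"
      using E_F by (simp add: algebra_simps)
    then show ?thesis
      unfolding E_check_def by (simp add: scale_simps mult.assoc[symmetric] left_diff_distrib)
  qed
  also have "\<dots> = inverse (qv ^ 2) \<cdot> (E_check * F) + inverse (qv ^ 2 - 1) \<cdot> (Ki ^ 2 - 1)"
    unfolding E_check_def F_Ki
    by (simp add: scale_simps mult.assoc power2_eq_square algebra_simps K_Ki qv_identities(3))
  finally show ?thesis .
qed

lemma q_commute_anticommutator:
  assumes "x * y = inverse (qv ^ 2) \<cdot> (y * x) + z"
  shows "x * y + y * x = (qint 2 * inverse qv) \<cdot> (y * x) + z"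
  using assms by (simp add: qv_identities(2) scale_simps)

definition t_elem :: "Qq \<Rightarrow> 'a" where "t_elem \<kappa> = F + E_check + \<kappa> \<cdot> Ki"

definition B_common :: "Qq \<Rightarrow> 'a" where
  "B_common \<kappa> = inverse (qint 2) \<cdot> E_check ^ 2 + inverse qv \<cdot> (E_check * F)
    + inverse (qint 2) \<cdot> F ^ 2 + (inverse qv * \<kappa>) \<cdot> (Ki * F) + (inverse qv * \<kappa>) \<cdot> (E_check * Ki)"

lemma t_elem_square:
  "t_elem \<kappa> ^ 2 = qint 2 \<cdot> B_common \<kappa> + (\<kappa> ^ 2 + inverse (qv ^ 2 - 1)) \<cdot> Ki ^ 2
    - inverse (qv ^ 2 - 1) \<cdot> 1"
proof -
  let ?s = "qint 2 * inverse qv"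
  have "t_elem \<kappa> ^ 2 = E_check ^ 2 + F ^ 2 + (F * E_check + E_check * F) + \<kappa> \<cdot> (F * Ki + Ki * F)
      + \<kappa> \<cdot> (Ki * E_check + E_check * Ki) + \<kappa> ^ 2 \<cdot> Ki ^ 2"
    unfolding t_elem_def power2_eq_square by (simp add: scale_simps algebra_simps)
  also have "\<dots> = E_check ^ 2 + F ^ 2 + ?s \<cdot> (E_check * F) + inverse (qv ^ 2 - 1) \<cdot> (Ki ^ 2 - 1)
      + \<kappa> \<cdot> ?s \<cdot> (Ki * F) + \<kappa> \<cdot> ?s \<cdot> (E_check * Ki) + \<kappa> ^ 2 \<cdot> Ki ^ 2"
    using q_commute_anticommutator[OF F_E_check] q_commute_anticommutator[of F Ki 0] q_commute_anticommutator[of Ki E_check 0]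
    by (simp add: F_Ki Ki_E_check)
  also have "\<dots> = qint 2 \<cdot> B_common \<kappa> + (\<kappa> ^ 2 + inverse (qv ^ 2 - 1)) \<cdot> Ki ^ 2
      - inverse (qv ^ 2 - 1) \<cdot> 1"
    using qv_identities(1) unfolding B_common_def by (simp add: scale_simps algebra_simps)
  finally show ?thesis .
qed

lemma B_ev_expansion:
  "inverse (qint 2) \<cdot> (t_elem \<kappa> ^ 2 - d \<cdot> 1)
    = B_common \<kappa> + ((qv + (qv ^ 3 - qv) * \<kappa> ^ 2) / (qv ^ 4 - 1)) \<cdot> (Ki ^ 2 - 1)
      + ((\<kappa> ^ 2 - d) / qint 2) \<cdot> 1"
proof -
  have "inverse (qint 2) \<cdot> (t_elem \<kappa> ^ 2 - d \<cdot> 1)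
      = B_common \<kappa> + (inverse (qint 2) * (\<kappa> ^ 2 + inverse (qv ^ 2 - 1))) \<cdot> Ki ^ 2
        - (inverse (qint 2) * (inverse (qv ^ 2 - 1) + d)) \<cdot> 1"
    using qv_identities(1) by (simp add: t_elem_square scale_simps distrib_left)
  then show ?thesis
    unfolding qv_identities(4) qv_identities(5)[where k = \<kappa>] by (simp add: scale_simps)
qed

lemma B_odd_expansion:
  "inverse (qint 2) \<cdot> (t_elem \<kappa> ^ 2 - 1 + d \<cdot> 1)
    = B_common \<kappa> + ((qv + (qv ^ 3 - qv) * \<kappa> ^ 2) / (qv ^ 4 - 1)) \<cdot> (Ki ^ 2 - qv ^ 2 \<cdot> 1)
      + (qv ^ 2 * (\<kappa> ^ 2 - d) / qint 2) \<cdot> 1 + (qv * d) \<cdot> 1"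
proof -
  have "inverse (qint 2) \<cdot> (t_elem \<kappa> ^ 2 - 1 + d \<cdot> 1)
      = B_common \<kappa> + (inverse (qint 2) * (\<kappa> ^ 2 + inverse (qv ^ 2 - 1))) \<cdot> Ki ^ 2
        - (inverse (qint 2) * (inverse (qv ^ 2 - 1) + 1 - d)) \<cdot> 1"
    using qv_identities(1) by (simp add: t_elem_square scale_simps distrib_left right_diff_distrib)
  then show ?thesis
    unfolding qv_identities(4) qv_identities(6)[where k = \<kappa>] by (simp add: scale_simps)
qed

end

theorem propositionA3:
  fixes c :: "int \<Rightarrow> int"
    and \<phi> :: "Qq \<Rightarrow> 'a::ring_1" and E F K Ki :: 'a
  assumes fin: "finite {i. c i \<noteq> 0}"
    and barinv: "lbar c = c"
    and U: "U_alg \<phi> E F K Ki"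
  defines "dia \<equiv> (\<Sum>i\<in>{i. c (2 * i) \<noteq> 0}. (-1) ^ nat \<bar>i\<bar> * c (2 * i))"
    and "Ech \<equiv> \<phi> (inverse qv) * E * Ki"
    and "t \<equiv> F + \<phi> (inverse qv) * E * Ki + \<phi> (laurent c) * Ki"
  shows "(\<phi> (inverse (qint 2)) * (t ^ 2 - \<phi> (of_int dia ^ 2)) =
           \<phi> (inverse (qint 2)) * Ech ^ 2 + \<phi> (inverse qv) * Ech * F + \<phi> (inverse (qint 2)) * F ^ 2
           + \<phi> (inverse qv * laurent c) * Ki * F + \<phi> (inverse qv * laurent c) * Ech * Ki
           + \<phi> ((qv + (qv ^ 3 - qv) * laurent c ^ 2) / (qv ^ 4 - 1)) * (Ki ^ 2 - 1)
           + \<phi> ((laurent c ^ 2 - of_int dia ^ 2) / qint 2)) \<and>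
         (\<phi> (inverse (qint 2)) * (t ^ 2 - 1 + \<phi> (of_int dia ^ 2)) =
           \<phi> (inverse (qint 2)) * Ech ^ 2 + \<phi> (inverse qv) * Ech * F + \<phi> (inverse (qint 2)) * F ^ 2
           + \<phi> (inverse qv * laurent c) * Ki * F + \<phi> (inverse qv * laurent c) * Ech * Ki
           + \<phi> ((qv + (qv ^ 3 - qv) * laurent c ^ 2) / (qv ^ 4 - 1)) * (Ki ^ 2 - \<phi> (qv ^ 2))
           + \<phi> (qv ^ 2 * (laurent c ^ 2 - of_int dia ^ 2) / qint 2)
           + \<phi> (qv * of_int dia ^ 2))"
  \<comment> \<open>The identities hold for every \<open>\<kappa> \<in> Q(q)\<close> and every scalar in place of \<open>\<diamondsuit>\<^sup>2\<close>.\<close>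
proof -
  interpret U_representation \<phi> E F K Ki
    by (rule U_representation.intro) (rule U)
  show ?thesis
    using B_ev_expansion[of "laurent c" "of_int dia ^ 2"]
      B_odd_expansion[of "laurent c" "of_int dia ^ 2"]
    unfolding t_def Ech_def t_elem_def B_common_def E_check_def scale_def
    by (simp add: mult.assoc)
qed

end
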